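(* Let $G$ be a dense $K_4^3\cup e$-free $3$-graph with $\lambda(G)>\frac{\sqrt3}{18}$. Then $G$ is $X_3$-free.
   Context: $K_4^3\cup e$ is the $3$-graph on $\{1,\dots,7\}$ with edges $\{123,124,134,234,567\}$. For a $3$-graph $G$ on $[n]$, $\lambda(G)=\max\{\sum_{e\in E(G)}\prod_{i\in e}x_i:\sum_ix_i=1,x_i\ge0\}$. An $r$-graph $G$ is dense if $\lambda(G')<\lambda(G)$ for every proper subgraph $G'$ of $G$. $X_i$ is the $3$-graph on $[2i+2]$ in which $\{1,2,2j+1,2j+2\}$ spans a $K_4^3$ for each $1\le j\le i$, and no other edges. *)

theory Defs
  imports Complex_Main
begin

definition hypergraph3 :: "'a set \<Rightarrow> 'a set set \<Rightarrow> bool" where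
  "hypergraph3 V E \<longleftrightarrow> finite V \<and> (\<forall>e\<in>E. e \<subseteq> V \<and> card e = 3)"

definition lagrangian :: "'a set \<Rightarrow> 'a set set \<Rightarrow> real" where
  "lagrangian V E = (if V = {} then 0 else
     Sup {(\<Sum>e\<in>E. \<Prod>i\<in>e. x i) | x :: 'a \<Rightarrow> real.
            (\<forall>i\<in>V. 0 \<le> x i) \<and> (\<Sum>i\<in>V. x i) = 1})"

definition dense3 :: "'a set \<Rightarrow> 'a set set \<Rightarrow> bool" where
  "dense3 V E \<longleftrightarrow> (\<forall>V' E'. hypergraph3 V' E' \<and> V' \<subseteq> V \<and> E' \<subseteq> E \<and> (V', E') \<noteq> (V, E)
       \<longrightarrow> lagrangian V' E' < lagrangian V E)"

definition contains_copy :: "'b set \<Rightarrow> 'b set set \<Rightarrow> 'a set \<Rightarrow> 'a set set \<Rightarrow> bool" where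
  "contains_copy VF EF V E \<longleftrightarrow>
     (\<exists>f. inj_on f VF \<and> f ` VF \<subseteq> V \<and> (\<forall>e\<in>EF. f ` e \<in> E))"

definition K43e_V :: "nat set" where "K43e_V = {1..7}"
definition K43e_E :: "nat set set" where
  "K43e_E = {{1,2,3},{1,2,4},{1,3,4},{2,3,4},{5,6,7}}"

definition X_V :: "nat \<Rightarrow> nat set" where "X_V i = {1..2*i+2}"
definition X_E :: "nat \<Rightarrow> nat set set" where
  "X_E i = {e. \<exists>j\<in>{1..i}. e \<subseteq> {1, 2, 2*j+1, 2*j+2} \<and> card e = 3}"

end

theory Submission
  imports Defs
begin

text \<open>Suppose \<open>G\<close> contains a copy of \<open>X\<^sub>3\<close>: two vertices \<open>a, b\<close> and three disjoint pairs
  \<open>{c\<^sub>j, d\<^sub>j}\<close> with each \<open>{a, b, c\<^sub>j, d\<^sub>j}\<close> spanning a \<open>K\<^sub>4\<^sup>3\<close>. Since \<open>G\<close> is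
  \<open>K\<^sub>4\<^sup>3 \<union> e\<close>-free, every edge meets each of these three \<open>K\<^sub>4\<^sup>3\<close>'s, so it contains \<open>a\<close> or
  \<open>b\<close>, or it picks one vertex from each pair. For a weighting \<open>x\<close> of the vertices with
  \<open>u = x a + x b\<close> and \<open>\<sigma>\<close> the weight of the six paired vertices, bounding the three kinds
  of edges separately (AM-GM, and Cauchy-Schwarz on the six paired weights) gives the edge
  polynomial at most \<open>u(1-u)(2-u)/4 + \<sigma>\<^sup>2(\<sigma>/27 - u/12)\<close> with \<open>u + \<sigma> \<le> 1\<close>, and this is at
  most \<open>\<surd>3/18\<close>. Hence \<open>\<lambda>(G) \<le> \<surd>3/18\<close>.\<close>

lemma prod3_le_mean_cube:
  fixes x y z :: real
  assumes "0 \<le> x" "0 \<le> y" "0 \<le> z"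
  shows "x * y * z \<le> ((x + y + z) / 3) ^ 3"
proof -
  define m where "m = (x + y) / 2"
  have "x * y \<le> m\<^sup>2"
    unfolding m_def using sum_squares_ge_zero[of "x - y" 0] by (simp add: power2_eq_square algebra_simps)
  then have "x * y * z \<le> m\<^sup>2 * z" using assms by (simp add: mult_right_mono)
  also have "m\<^sup>2 * z \<le> ((2 * m + z) / 3) ^ 3"
  proof -
    have "((2 * m + z) / 3) ^ 3 - m\<^sup>2 * z = (m - z)\<^sup>2 * (8 * m + z) / 27"
      by (simp add: field_simps power2_eq_square power3_eq_cube)
    moreover have "0 \<le> (m - z)\<^sup>2 * (8 * m + z)" using assms unfolding m_def by simp
    ultimately show ?thesis by linarith
  qed
  also have "2 * m + z = x + y + z" unfolding m_def by simp
  finally show ?thesis .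
qed

lemma cubic_le_sqrt3_div_18:
  fixes u :: real
  assumes "0 \<le> u" "u \<le> 1"
  shows "u * (1 - u) * (2 - u) / 4 \<le> sqrt 3 / 18"
proof -
  define s where "s = sqrt 3"
  have "s\<^sup>2 = 3" "0 \<le> s" unfolding s_def by simp_all
  \<comment> \<open>the maximum is attained at \<open>u = 1 - s/3\<close>, a double root of the difference\<close>
  have "sqrt 3 / 18 - u * (1 - u) * (2 - u) / 4
      = (u - (1 - s/3))\<^sup>2 * ((1 + 2*s/3) - u) / 4 - (s\<^sup>2 - 3) * (2*s/27 - 1/3 + u/3) / 4"
    unfolding s_def[symmetric] by (simp add: field_simps power2_eq_square power3_eq_cube)
  then have "sqrt 3 / 18 - u * (1 - u) * (2 - u) / 4 = (u - (1 - s/3))\<^sup>2 * ((1 + 2*s/3) - u) / 4"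
    using \<open>s\<^sup>2 = 3\<close> by simp
  moreover have "0 \<le> (u - (1 - s/3))\<^sup>2 * ((1 + 2*s/3) - u)" using assms \<open>0 \<le> s\<close> by simp
  ultimately show ?thesis by linarith
qed

lemma endpoint_cubic_le_sqrt3_div_18:
  fixes u :: real
  assumes "0 \<le> u" "u \<le> 1"
  shows "u * (1 - u) * (2 - u) / 4 + (1 - u)\<^sup>2 * ((1 - u) / 27 - u / 12) \<le> sqrt 3 / 18"
proof -
  \<comment> \<open>the left side stays below 0.0921, so the rational separator 0.096 leaves enough slack for
    the elementary certificate below (expansion around \<open>u = 3/8\<close>)\<close>
  define w where "w = u - 3/8"
  have "w\<^sup>2 * (14 * u - 40.5) \<le> w\<^sup>2 * (-26.5)"
    by (rule mult_left_mono) (use assms in auto)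
  moreover have "0 \<le> (w - 21/1696)\<^sup>2" by simp
  ultimately have num: "w\<^sup>2 * (14 * u - 40.5) + 0.65625 * w - 0.42659375 \<le> 0"
    by (simp add: power2_eq_square algebra_simps)
  have "u * (1 - u) * (2 - u) / 4 + (1 - u)\<^sup>2 * ((1 - u) / 27 - u / 12) - 0.096
      = (w\<^sup>2 * (14 * u - 40.5) + 0.65625 * w - 0.42659375) / 108"
    unfolding w_def by (simp add: field_simps power2_eq_square power3_eq_cube)
  also have "\<dots> \<le> 0" using num by (simp add: divide_nonpos_pos)
  finally have "u * (1 - u) * (2 - u) / 4 + (1 - u)\<^sup>2 * ((1 - u) / 27 - u / 12) \<le> 0.096"
    by simp
  moreover have "1.728 \<le> sqrt 3" by (rule real_le_rsqrt) (simp add: power2_eq_square)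
  ultimately show ?thesis by simp
qed

lemma cubic_two_param_le_sqrt3_div_18:
  fixes u \<sigma> :: real
  assumes "0 \<le> u" "0 \<le> \<sigma>" "u + \<sigma> \<le> 1"
  shows "u * (1 - u) * (2 - u) / 4 + \<sigma>\<^sup>2 * (\<sigma> / 27 - u / 12) \<le> sqrt 3 / 18"
proof (cases "\<sigma> / 27 \<le> u / 12")
  case True
  then have "\<sigma>\<^sup>2 * (\<sigma> / 27 - u / 12) \<le> 0" by (simp add: mult_nonneg_nonpos)
  then show ?thesis using cubic_le_sqrt3_div_18[of u] assms by linarith
next
  case False
  \<comment> \<open>the second summand is then increasing in \<open>\<sigma>\<close>, so it is largest at \<open>\<sigma> = 1 - u\<close>\<close>
  have "\<sigma>\<^sup>2 * (\<sigma> / 27 - u / 12) \<le> (1 - u)\<^sup>2 * ((1 - u) / 27 - u / 12)"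
    by (rule mult_mono) (use False assms in \<open>auto intro: power_mono\<close>)
  then show ?thesis using endpoint_cubic_le_sqrt3_div_18[of u] assms by linarith
qed

lemma cover_weight_le_sqrt3_div_18:
  fixes \<alpha> \<beta> S Q c1 d1 c2 d2 c3 d3 :: real
  assumes nonneg: "0 \<le> \<alpha>" "0 \<le> \<beta>" "0 \<le> c1" "0 \<le> d1" "0 \<le> c2" "0 \<le> d2" "0 \<le> c3" "0 \<le> d3"
    and total: "\<alpha> + \<beta> + S = 1"
    and mass: "c1 + d1 + c2 + d2 + c3 + d3 \<le> S"
    and squares: "c1\<^sup>2 + d1\<^sup>2 + c2\<^sup>2 + d2\<^sup>2 + c3\<^sup>2 + d3\<^sup>2 \<le> Q"
  shows "\<alpha> * \<beta> * S + (\<alpha> + \<beta>) * ((S\<^sup>2 - Q) / 2) + (c1 + d1) * (c2 + d2) * (c3 + d3) \<le> sqrt 3 / 18"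
proof -
  define u where "u = \<alpha> + \<beta>"
  define \<sigma> where "\<sigma> = c1 + d1 + c2 + d2 + c3 + d3"
  have S: "S = 1 - u" using total unfolding u_def by simp
  have "0 \<le> u" "0 \<le> \<sigma>" "u + \<sigma> \<le> 1" using nonneg mass S unfolding u_def \<sigma>_def by simp_all
  have "\<alpha> * \<beta> \<le> u\<^sup>2 / 4"
    unfolding u_def using sum_squares_ge_zero[of "\<alpha> - \<beta>" 0] by (simp add: power2_eq_square algebra_simps)
  then have first: "\<alpha> * \<beta> * S \<le> u\<^sup>2 / 4 * S"
    using \<open>u + \<sigma> \<le> 1\<close> \<open>0 \<le> \<sigma>\<close> S by (intro mult_right_mono) simp_all
  have "\<sigma>\<^sup>2 \<le> 6 * (c1\<^sup>2 + d1\<^sup>2 + c2\<^sup>2 + d2\<^sup>2 + c3\<^sup>2 + d3\<^sup>2)"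
    unfolding \<sigma>_def
    using sum_squares_ge_zero[of "c1 - d1" "c2 - d2"] sum_squares_ge_zero[of "c1 - c2" "c1 - d2"]
      sum_squares_ge_zero[of "d1 - c2" "d1 - d2"] sum_squares_ge_zero[of "c3 - d3" "c1 - c3"]
      sum_squares_ge_zero[of "c1 - d3" "d1 - c3"] sum_squares_ge_zero[of "d1 - d3" "c2 - c3"]
      sum_squares_ge_zero[of "c2 - d3" "d2 - c3"] sum_squares_ge_zero[of "d2 - d3" 0]
    by (simp add: power2_eq_square algebra_simps)
  then have second: "(\<alpha> + \<beta>) * ((S\<^sup>2 - Q) / 2) \<le> u * ((S\<^sup>2 - \<sigma>\<^sup>2 / 6) / 2)"
    unfolding u_def[symmetric] using squares \<open>0 \<le> u\<close> by (intro mult_left_mono) simp_all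
  have third: "(c1 + d1) * (c2 + d2) * (c3 + d3) \<le> (\<sigma> / 3) ^ 3"
    unfolding \<sigma>_def using prod3_le_mean_cube[of "c1 + d1" "c2 + d2" "c3 + d3"] nonneg
    by (simp add: add.assoc)
  have "u\<^sup>2 / 4 * S + u * ((S\<^sup>2 - \<sigma>\<^sup>2 / 6) / 2) + (\<sigma> / 3) ^ 3
      = u * (1 - u) * (2 - u) / 4 + \<sigma>\<^sup>2 * (\<sigma> / 27 - u / 12)"
    unfolding S by (simp add: field_simps power2_eq_square power3_eq_cube)
  then show ?thesis
    using first second third cubic_two_param_le_sqrt3_div_18[OF \<open>0 \<le> u\<close> \<open>0 \<le> \<sigma>\<close> \<open>u + \<sigma> \<le> 1\<close>]
    by linarith
qed

lemma sum_offdiag_products: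
  fixes x :: "'a \<Rightarrow> real"
  assumes "finite R"
  shows "(\<Sum>(u, v)\<in>{(u, v) \<in> R \<times> R. u \<noteq> v}. x u * x v) = (\<Sum>r\<in>R. x r)\<^sup>2 - (\<Sum>r\<in>R. (x r)\<^sup>2)"
proof -
  have "{(u, v) \<in> R \<times> R. u \<noteq> v} = Sigma R (\<lambda>u. R - {u})" by auto
  then have "(\<Sum>(u, v)\<in>{(u, v) \<in> R \<times> R. u \<noteq> v}. x u * x v) = (\<Sum>u\<in>R. \<Sum>v\<in>R - {u}. x u * x v)"
    using assms by (simp add: sum.Sigma)
  also have "\<dots> = (\<Sum>u\<in>R. x u * ((\<Sum>r\<in>R. x r) - x u))"
    using assms by (intro sum.cong) (simp_all add: sum_distrib_left[symmetric] sum_diff1)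
  also have "\<dots> = (\<Sum>r\<in>R. x r)\<^sup>2 - (\<Sum>r\<in>R. (x r)\<^sup>2)"
    by (simp add: right_diff_distrib sum_subtractf sum_distrib_right[symmetric] power2_eq_square)
  finally show ?thesis .
qed

lemma sum_prod_pairs_le:
  fixes x :: "'a \<Rightarrow> real"
  assumes "finite R" and nonneg: "\<forall>r\<in>R. 0 \<le> x r" and pairs: "A \<subseteq> {p. p \<subseteq> R \<and> card p = 2}"
  shows "(\<Sum>p\<in>A. \<Prod>i\<in>p. x i) \<le> ((\<Sum>r\<in>R. x r)\<^sup>2 - (\<Sum>r\<in>R. (x r)\<^sup>2)) / 2"
proof -
  \<comment> \<open>each pair in \<open>A\<close> is counted twice as an ordered pair\<close>
  define D where "D = {(u, v) \<in> R \<times> R. u \<noteq> v \<and> {u, v} \<in> A}"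
  have "finite A" using pairs \<open>finite R\<close> by (auto intro: finite_subset[of A "Pow R"])
  have "finite D" unfolding D_def using \<open>finite R\<close> by (auto intro: finite_subset[of _ "R \<times> R"])
  have "2 * (\<Sum>p\<in>A. \<Prod>i\<in>p. x i) = (\<Sum>p\<in>A. \<Sum>(u, v)\<in>{q \<in> D. {fst q, snd q} = p}. x u * x v)"
    unfolding sum_distrib_left
  proof (rule sum.cong)
    fix p assume "p \<in> A"
    then obtain u v where p: "p = {u, v}" "u \<noteq> v" using pairs by (auto simp: card_2_iff)
    then have "{q \<in> D. {fst q, snd q} = p} = {(u, v), (v, u)}"
      using \<open>p \<in> A\<close> pairs unfolding D_def by (auto simp: doubleton_eq_iff insert_commute)
    then show "2 * (\<Prod>i\<in>p. x i) = (\<Sum>(u, v)\<in>{q \<in> D. {fst q, snd q} = p}. x u * x v)"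
      using p by simp
  qed simp
  also have "\<dots> = (\<Sum>(u, v)\<in>D. x u * x v)"
    using \<open>finite A\<close> \<open>finite D\<close> by (intro sum.group) (auto simp: D_def)
  also have "\<dots> \<le> (\<Sum>(u, v)\<in>{(u, v) \<in> R \<times> R. u \<noteq> v}. x u * x v)"
    using \<open>finite R\<close> nonneg
    by (intro sum_mono2) (auto simp: D_def intro: finite_subset[of _ "R \<times> R"])
  finally show ?thesis using sum_offdiag_products[OF \<open>finite R\<close>, of x] by simp
qed

lemma sum_le_sum_over_cover:
  fixes g :: "'b \<Rightarrow> real"
  assumes "finite I" "F \<subseteq> h ` I" "\<forall>i\<in>I. 0 \<le> g (h i)"
  shows "sum g F \<le> (\<Sum>i\<in>I. g (h i))"
proof -
  have "sum g F \<le> sum g (h ` I)" using assms by (intro sum_mono2) auto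
  also have "\<dots> \<le> (\<Sum>i\<in>I. g (h i))" using assms sum_image_le[of I g h] by (simp add: comp_def)
  finally show ?thesis .
qed

lemma sum_edges_through_pair_le:
  fixes x :: "'a \<Rightarrow> real"
  assumes "finite R" "\<forall>r\<in>R. 0 \<le> x r" "0 \<le> x a" "0 \<le> x b" "a \<noteq> b" "a \<notin> R" "b \<notin> R"
    and edges: "\<forall>e\<in>F. card e = 3 \<and> {a, b} \<subseteq> e \<and> e \<subseteq> insert a (insert b R)"
  shows "(\<Sum>e\<in>F. \<Prod>i\<in>e. x i) \<le> x a * x b * (\<Sum>r\<in>R. x r)"
proof -
  have "F \<subseteq> (\<lambda>r. {a, b, r}) ` R"
  proof
    fix e assume "e \<in> F"
    then have "card (e - {a, b}) = 1"
      using edges \<open>a \<noteq> b\<close> by (simp add: card_Diff_subset card.infinite)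
    then obtain r where r: "e - {a, b} = {r}" by (auto simp: card_1_singleton_iff)
    then have "e = {a, b, r}" using edges \<open>e \<in> F\<close> by auto
    moreover have "r \<in> R" using r edges \<open>e \<in> F\<close> by auto
    ultimately show "e \<in> (\<lambda>r. {a, b, r}) ` R" by blast
  qed
  then have "(\<Sum>e\<in>F. \<Prod>i\<in>e. x i) \<le> (\<Sum>r\<in>R. \<Prod>i\<in>{a, b, r}. x i)"
    using assms by (intro sum_le_sum_over_cover) (auto intro: prod_nonneg)
  also have "\<dots> = (\<Sum>r\<in>R. x a * x b * x r)"
  proof (rule sum.cong)
    fix r assume "r \<in> R"
    then have "r \<noteq> a" "r \<noteq> b" using assms by auto
    then show "(\<Prod>i\<in>{a, b, r}. x i) = x a * x b * x r" using \<open>a \<noteq> b\<close> by (simp add: ac_simps)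
  qed simp
  finally show ?thesis by (simp add: sum_distrib_left)
qed

lemma sum_edges_through_vertex_le:
  fixes x :: "'a \<Rightarrow> real"
  assumes "finite R" "\<forall>r\<in>R. 0 \<le> x r" "0 \<le> x v"
    and edges: "\<forall>e\<in>F. card e = 3 \<and> v \<in> e \<and> e - {v} \<subseteq> R"
  shows "(\<Sum>e\<in>F. \<Prod>i\<in>e. x i) \<le> x v * (((\<Sum>r\<in>R. x r)\<^sup>2 - (\<Sum>r\<in>R. (x r)\<^sup>2)) / 2)"
proof -
  have "inj_on (\<lambda>e. e - {v}) F"
    using edges by (intro inj_onI) (metis insert_Diff)
  then have "(\<Sum>e\<in>F. \<Prod>i\<in>e - {v}. x i) = (\<Sum>p\<in>(\<lambda>e. e - {v}) ` F. \<Prod>i\<in>p. x i)"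
    by (simp add: sum.reindex)
  also have "\<dots> \<le> ((\<Sum>r\<in>R. x r)\<^sup>2 - (\<Sum>r\<in>R. (x r)\<^sup>2)) / 2"
    using assms edges by (intro sum_prod_pairs_le) (auto simp: card.infinite)
  finally have "x v * (\<Sum>e\<in>F. \<Prod>i\<in>e - {v}. x i) \<le> x v * (((\<Sum>r\<in>R. x r)\<^sup>2 - (\<Sum>r\<in>R. (x r)\<^sup>2)) / 2)"
    using \<open>0 \<le> x v\<close> by (rule mult_left_mono)
  moreover have "(\<Sum>e\<in>F. \<Prod>i\<in>e. x i) = x v * (\<Sum>e\<in>F. \<Prod>i\<in>e - {v}. x i)"
    unfolding sum_distrib_left
  proof (rule sum.cong)
    fix e assume "e \<in> F"
    then have "finite e" "v \<in> e" using edges by (auto simp: card_ge_0_finite)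
    then show "(\<Prod>i\<in>e. x i) = x v * (\<Prod>i\<in>e - {v}. x i)" by (rule prod.remove)
  qed simp
  ultimately show ?thesis by simp
qed

lemma sum_transversal_edges_le:
  fixes x :: "'a \<Rightarrow> real"
  assumes distinct: "distinct [c1, d1, c2, d2, c3, d3]"
    and nonneg: "\<forall>r\<in>{c1, d1, c2, d2, c3, d3}. 0 \<le> x r"
    and edges: "\<forall>e\<in>F. card e = 3 \<and> e \<inter> {c1, d1} \<noteq> {} \<and> e \<inter> {c2, d2} \<noteq> {} \<and> e \<inter> {c3, d3} \<noteq> {}"
  shows "(\<Sum>e\<in>F. \<Prod>i\<in>e. x i) \<le> (x c1 + x d1) * (x c2 + x d2) * (x c3 + x d3)"
proof -
  define P where "P = {c1, d1} \<times> {c2, d2} \<times> {c3, d3}"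
  define h where "h = (\<lambda>(y1, y2, y3). {y1, y2, y3 :: 'a})"
  have "F \<subseteq> h ` P"
  proof
    fix e assume "e \<in> F"
    then have "e \<inter> {c1, d1} \<noteq> {}" "e \<inter> {c2, d2} \<noteq> {}" "e \<inter> {c3, d3} \<noteq> {}"
      using edges by simp_all
    then obtain y1 y2 y3 where y: "y1 \<in> e \<inter> {c1, d1}" "y2 \<in> e \<inter> {c2, d2}" "y3 \<in> e \<inter> {c3, d3}"
      by (meson ex_in_conv)
    moreover have "card {y1, y2, y3} = 3" using y distinct by auto
    moreover have "card e = 3" using edges \<open>e \<in> F\<close> by simp
    ultimately have "e = {y1, y2, y3}"
      by (metis IntD1 card_ge_0_finite card_subset_eq empty_subsetI insert_subsetI zero_less_numeral)
    moreover have "(y1, y2, y3) \<in> P" using y unfolding P_def by blast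
    ultimately show "e \<in> h ` P" unfolding h_def by (auto intro: image_eqI[where x = "(y1, y2, y3)"])
  qed
  then have "(\<Sum>e\<in>F. \<Prod>i\<in>e. x i) \<le> (\<Sum>y\<in>P. \<Prod>i\<in>h y. x i)"
    using nonneg by (intro sum_le_sum_over_cover) (auto simp: P_def h_def intro: prod_nonneg)
  also have "\<dots> = (\<Sum>(y1, y2, y3)\<in>P. x y1 * x y2 * x y3)"
    using distinct by (intro sum.cong) (auto simp: P_def h_def)
  also have "\<dots> = (x c1 + x d1) * (x c2 + x d2) * (x c3 + x d3)"
    using distinct by (simp add: P_def sum.cartesian_product[symmetric] algebra_simps)
  finally show ?thesis .
qed

lemma lagrangian_le:
  assumes "V \<noteq> {}" "finite V"
    and bound: "\<And>x. \<forall>i\<in>V. 0 \<le> x i \<Longrightarrow> (\<Sum>i\<in>V. x i) = 1 \<Longrightarrow> (\<Sum>e\<in>E. \<Prod>i\<in>e. x i) \<le> B"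
  shows "lagrangian V E \<le> B"
proof -
  let ?values = "{(\<Sum>e\<in>E. \<Prod>i\<in>e. x i) | x :: 'a \<Rightarrow> real. (\<forall>i\<in>V. 0 \<le> x i) \<and> (\<Sum>i\<in>V. x i) = 1}"
  have "(\<Sum>i\<in>V. 1 / real (card V)) = 1" using assms by simp
  then have "?values \<noteq> {}" by (auto intro!: exI[of _ "\<lambda>_. 1 / real (card V)"])
  moreover have "\<forall>y\<in>?values. y \<le> B" using bound by auto
  ultimately have "Sup ?values \<le> B" by (meson cSup_least)
  then show ?thesis unfolding lagrangian_def using \<open>V \<noteq> {}\<close> by simp
qed

lemma edge_poly_le_sqrt3_div_18:
  fixes x :: "'a \<Rightarrow> real"
  assumes G: "hypergraph3 V E"
    and distinct: "distinct [a, b, c1, d1, c2, d2, c3, d3]"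
    and in_V: "{a, b, c1, d1, c2, d2, c3, d3} \<subseteq> V"
    and cover: "\<forall>e\<in>E. a \<in> e \<or> b \<in> e \<or>
                  (e \<inter> {c1, d1} \<noteq> {} \<and> e \<inter> {c2, d2} \<noteq> {} \<and> e \<inter> {c3, d3} \<noteq> {})"
    and nonneg: "\<forall>i\<in>V. 0 \<le> x i" and total: "(\<Sum>i\<in>V. x i) = 1"
  shows "(\<Sum>e\<in>E. \<Prod>i\<in>e. x i) \<le> sqrt 3 / 18"
proof -
  define R where "R = V - {a, b}"
  define S where "S = (\<Sum>r\<in>R. x r)"
  define Q where "Q = (\<Sum>r\<in>R. (x r)\<^sup>2)"
  let ?w = "\<lambda>e. \<Prod>i\<in>e. x i"
  let ?A = "{e. a \<in> e}" and ?B = "{e. b \<in> e}"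
  have "finite V" and edges: "\<forall>e\<in>E. e \<subseteq> V \<and> card e = 3" using G by (simp_all add: hypergraph3_def)
  then have "finite E" by (auto intro: finite_subset[of E "Pow V"])
  have "finite R" "\<forall>r\<in>R. 0 \<le> x r" "a \<notin> R" "b \<notin> R" "a \<noteq> b" "0 \<le> x a" "0 \<le> x b"
    using \<open>finite V\<close> nonneg in_V distinct by (auto simp: R_def)
  have "sum ?w E = sum ?w (E \<inter> ?A \<inter> ?B) + sum ?w (E \<inter> ?A - ?B) + sum ?w ((E - ?A) \<inter> ?B) + sum ?w (E - ?A - ?B)"
    using \<open>finite E\<close> by (simp add: sum.Int_Diff[of E _ ?A] sum.Int_Diff[of "E \<inter> ?A" _ ?B]
        sum.Int_Diff[of "E - ?A" _ ?B])
  also have "\<dots> \<le> x a * x b * S + x a * ((S\<^sup>2 - Q) / 2) + x b * ((S\<^sup>2 - Q) / 2)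
      + (x c1 + x d1) * (x c2 + x d2) * (x c3 + x d3)"
  proof (intro add_mono)
    show "sum ?w (E \<inter> ?A \<inter> ?B) \<le> x a * x b * S"
      unfolding S_def using edges \<open>finite R\<close> \<open>\<forall>r\<in>R. 0 \<le> x r\<close> \<open>a \<notin> R\<close> \<open>b \<notin> R\<close> \<open>a \<noteq> b\<close>
        \<open>0 \<le> x a\<close> \<open>0 \<le> x b\<close>
      by (intro sum_edges_through_pair_le) (auto simp: R_def)
    show "sum ?w (E \<inter> ?A - ?B) \<le> x a * ((S\<^sup>2 - Q) / 2)"
      unfolding S_def Q_def using edges \<open>finite R\<close> \<open>\<forall>r\<in>R. 0 \<le> x r\<close> \<open>0 \<le> x a\<close>
      by (intro sum_edges_through_vertex_le) (auto simp: R_def)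
    show "sum ?w ((E - ?A) \<inter> ?B) \<le> x b * ((S\<^sup>2 - Q) / 2)"
      unfolding S_def Q_def using edges \<open>finite R\<close> \<open>\<forall>r\<in>R. 0 \<le> x r\<close> \<open>0 \<le> x b\<close>
      by (intro sum_edges_through_vertex_le) (auto simp: R_def)
    show "sum ?w (E - ?A - ?B) \<le> (x c1 + x d1) * (x c2 + x d2) * (x c3 + x d3)"
      using distinct nonneg in_V edges cover by (intro sum_transversal_edges_le) auto
  qed
  also have "\<dots> \<le> sqrt 3 / 18"
  proof -
    have six: "{c1, d1, c2, d2, c3, d3} \<subseteq> R" using in_V distinct by (auto simp: R_def)
    have sum_six: "(\<Sum>r\<in>{c1, d1, c2, d2, c3, d3}. g r) = g c1 + g d1 + g c2 + g d2 + g c3 + g d3"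
      for g :: "'a \<Rightarrow> real"
      using distinct by (simp add: add.assoc)
    have "x a + x b + S = 1"
      using total \<open>finite V\<close> in_V \<open>a \<noteq> b\<close> by (simp add: S_def R_def sum.subset_diff[of "{a, b}" V])
    moreover have "x c1 + x d1 + x c2 + x d2 + x c3 + x d3 \<le> S"
      unfolding sum_six[of x, symmetric] S_def using \<open>\<forall>r\<in>R. 0 \<le> x r\<close>
      by (intro sum_mono2[OF \<open>finite R\<close> six]) auto
    moreover have "(x c1)\<^sup>2 + (x d1)\<^sup>2 + (x c2)\<^sup>2 + (x d2)\<^sup>2 + (x c3)\<^sup>2 + (x d3)\<^sup>2 \<le> Q"
      unfolding sum_six[of "\<lambda>r. (x r)\<^sup>2", symmetric] Q_def by (intro sum_mono2[OF \<open>finite R\<close> six]) auto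
    ultimately have "x a * x b * S + (x a + x b) * ((S\<^sup>2 - Q) / 2) + (x c1 + x d1) * (x c2 + x d2) * (x c3 + x d3)
        \<le> sqrt 3 / 18"
      using nonneg in_V by (intro cover_weight_le_sqrt3_div_18) auto
    then show ?thesis using distrib_right[of "x a" "x b" "(S\<^sup>2 - Q) / 2"] by linarith
  qed
  finally show ?thesis .
qed

lemma edge_meets_K4:
  assumes K43e_free: "\<not> contains_copy K43e_V K43e_E V E"
    and "distinct [w1, w2, w3, w4]" "{w1, w2, w3, w4} \<subseteq> V"
    and K4: "{w1, w2, w3} \<in> E" "{w1, w2, w4} \<in> E" "{w1, w3, w4} \<in> E" "{w2, w3, w4} \<in> E"
    and "e \<in> E" "e \<subseteq> V" "card e = 3"
  shows "e \<inter> {w1, w2, w3, w4} \<noteq> {}"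
proof
  assume disjoint: "e \<inter> {w1, w2, w3, w4} = {}"
  obtain p q r where e: "e = {p, q, r}" "p \<noteq> q" "q \<noteq> r" "p \<noteq> r"
    using \<open>card e = 3\<close> card_3_iff by metis
  define f where "f n = (if n = (1::nat) then w1 else if n = 2 then w2 else if n = 3 then w3
     else if n = 4 then w4 else if n = 5 then p else if n = 6 then q else r)" for n
  have K43e_V: "K43e_V = {1, 2, 3, 4, 5, 6, 7}" unfolding K43e_V_def by auto
  have "inj_on f K43e_V"
    using assms(2) disjoint e unfolding K43e_V inj_on_def by (auto simp: f_def)
  moreover have "f ` K43e_V \<subseteq> V" using assms(3) \<open>e \<subseteq> V\<close> e(1) by (auto simp: K43e_V f_def)
  moreover have "\<forall>e'\<in>K43e_E. f ` e' \<in> E"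
  proof -
    have "f ` {5, 6, 7} = e" "f ` {1, 2, 3} = {w1, w2, w3}" "f ` {1, 2, 4} = {w1, w2, w4}"
      "f ` {1, 3, 4} = {w1, w3, w4}" "f ` {2, 3, 4} = {w2, w3, w4}"
      using e(1) by (auto simp: f_def)
    then show ?thesis unfolding K43e_E_def using K4 \<open>e \<in> E\<close> by simp
  qed
  ultimately show False using K43e_free unfolding contains_copy_def by blast
qed

lemma X_E_K4_edges:
  assumes "j \<in> {1..i}"
  shows "{1, 2, 2*j+1} \<in> X_E i" "{1, 2, 2*j+2} \<in> X_E i"
    "{1, 2*j+1, 2*j+2} \<in> X_E i" "{2, 2*j+1, 2*j+2} \<in> X_E i"
  using assms unfolding X_E_def by (auto intro!: bexI[of _ j])

lemma edge_meets_K4_of_X_copy: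
  assumes G: "hypergraph3 V E" and K43e_free: "\<not> contains_copy K43e_V K43e_E V E"
    and f: "inj_on f (X_V i)" "f ` X_V i \<subseteq> V" "\<forall>e\<in>X_E i. f ` e \<in> E"
    and "j \<in> {1..i}" "e \<in> E"
  shows "e \<inter> {f 1, f 2, f (2*j+1), f (2*j+2)} \<noteq> {}"
proof (rule edge_meets_K4[OF K43e_free])
  have "{1, 2, 2*j+1, 2*j+2} \<subseteq> X_V i" using \<open>j \<in> {1..i}\<close> by (auto simp: X_V_def)
  then show "distinct [f 1, f 2, f (2*j+1), f (2*j+2)]" "{f 1, f 2, f (2*j+1), f (2*j+2)} \<subseteq> V"
    using f(1,2) \<open>j \<in> {1..i}\<close> by (auto simp: inj_on_eq_iff[OF f(1)])
  show "{f 1, f 2, f (2*j+1)} \<in> E" "{f 1, f 2, f (2*j+2)} \<in> E"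
    "{f 1, f (2*j+1), f (2*j+2)} \<in> E" "{f 2, f (2*j+1), f (2*j+2)} \<in> E"
    using f(3) X_E_K4_edges[OF \<open>j \<in> {1..i}\<close>] by force+
  show "e \<in> E" "e \<subseteq> V" "card e = 3" using G \<open>e \<in> E\<close> by (auto simp: hypergraph3_def)
qed

theorem lemma5p11:
  fixes V :: "'a set" and E :: "'a set set"
  assumes "hypergraph3 V E"
    and "dense3 V E"
    and "\<not> contains_copy K43e_V K43e_E V E"
    and "lagrangian V E > sqrt 3 / 18"
  shows "\<not> contains_copy (X_V 3) (X_E 3) V E"
proof
  assume "contains_copy (X_V 3) (X_E 3) V E"
  then obtain f where f: "inj_on f (X_V 3)" "f ` X_V 3 \<subseteq> V" "\<forall>e\<in>X_E 3. f ` e \<in> E"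
    unfolding contains_copy_def by blast
  have X_V: "X_V 3 = {1, 2, 3, 4, 5, 6, 7, 8}" by (auto simp: X_V_def)
  have "distinct [f 1, f 2, f 3, f 4, f 5, f 6, f 7, f 8]" using f(1) unfolding X_V inj_on_def by auto
  moreover have "{f 1, f 2, f 3, f 4, f 5, f 6, f 7, f 8} \<subseteq> V" using f(2) unfolding X_V by auto
  moreover have "\<forall>e\<in>E. f 1 \<in> e \<or> f 2 \<in> e \<or>
      (e \<inter> {f 3, f 4} \<noteq> {} \<and> e \<inter> {f 5, f 6} \<noteq> {} \<and> e \<inter> {f 7, f 8} \<noteq> {})"
    using edge_meets_K4_of_X_copy[OF assms(1,3) f, of 1] edge_meets_K4_of_X_copy[OF assms(1,3) f, of 2]
      edge_meets_K4_of_X_copy[OF assms(1,3) f, of 3]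
    by auto
  ultimately have "lagrangian V E \<le> sqrt 3 / 18"
    using assms(1) by (intro lagrangian_le edge_poly_le_sqrt3_div_18) (auto simp: hypergraph3_def)
  then show False using assms(4) by simp
qed

end
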